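(* Let $X>0$, $n\ge1$, let $A_0,A_1$ be $X$-periodic $\mathbb{C}^{n\times n}$-valued functions in $L^2_{\rm per}([0,X])$, let $L=\partial_x^2+\partial_xA_1+A_0$ act on $L^2_{\rm per}([0,X];\mathbb{C}^n)$, and for $J\in\mathbb{N}$ let $P_J$ be the orthogonal projection onto $\mathcal{H}_J=\operatorname{span}\{e^{2\pi ikx/X}v:\ |k|\le J,\ v\in\mathbb{C}^n\}$. Let $L_J=P_JLP_J|_{\mathcal{H}_J}$ (the Hill truncation $\mathcal{D}_J^2+\mathcal{D}_J\mathcal{A}_{1,J}+\mathcal{A}_{0,J}$) and $K_J(\lambda)=P_JK(\lambda)P_J|_{\mathcal{H}_J}$, where $K(\lambda)=\partial_x(\partial_x^2-1)^{-1}A_1+(\partial_x^2-1)^{-1}(A_0+(1-\lambda)I)$. Define $D_J(\lambda)={\det}_2(I+K_J(\lambda))$ on $\mathcal{H}_J$. Then the zeros of $D_J$ coincide with the eigenvalues of the matrix $L_J$, and the order of each zero equals the algebraic multiplicity of the eigenvalue.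
   Context: In Fourier coordinates, $\mathcal{D}_J$ is the diagonal matrix of the multipliers $2\pi ik/X$, $|k|\le J$, and $\mathcal{A}_{m,J}$ is the block Toeplitz matrix $(\hat A_m(j-k))_{|j|,|k|\le J}$. On a finite-dimensional space ${\det}_2(I-A)=\det(I-A)e^{\operatorname{tr}A}$, and ${\det}_2(I+K)$ means ${\det}_2(I-(-K))$. *)

theory Defs
  imports "HOL-Complex_Analysis.Complex_Analysis" "Jordan_Normal_Form.Char_Poly"
begin

definition fourier_coeff :: "real \<Rightarrow> (real \<Rightarrow> complex) \<Rightarrow> int \<Rightarrow> complex" where
  "fourier_coeff X f k =
     complex_of_real (1 / X) *
       (LINT x:{0..X}|lebesgue. cis (- 2 * pi * real_of_int k * x / X) * f x)"

text \<open>Fourier coordinates on H_J: index i < n(2J+1) corresponds to the basis vector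
  e^{2 pi i k x / X} e_a with k = i div n - J, a = i mod n.\<close>
definition hdim :: "nat \<Rightarrow> nat \<Rightarrow> nat" where
  "hdim n J = n * (2 * J + 1)"

definition freq :: "nat \<Rightarrow> nat \<Rightarrow> nat \<Rightarrow> int" where
  "freq n J i = int (i div n) - int J"

definition comp :: "nat \<Rightarrow> nat \<Rightarrow> nat" where
  "comp n i = i mod n"

definition mult_dx :: "real \<Rightarrow> int \<Rightarrow> complex" where
  "mult_dx X k = 2 * pi * \<i> * of_int k / of_real X"

definition DJ :: "real \<Rightarrow> nat \<Rightarrow> nat \<Rightarrow> complex mat" where
  "DJ X n J = mat (hdim n J) (hdim n J)
     (\<lambda>(i, j). if i = j then mult_dx X (freq n J i) else 0)"

text \<open>Fourier multiplier of (d^2/dx^2 - 1)^{-1}, truncated to H_J.\<close>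
definition RJ :: "real \<Rightarrow> nat \<Rightarrow> nat \<Rightarrow> complex mat" where
  "RJ X n J = mat (hdim n J) (hdim n J)
     (\<lambda>(i, j). if i = j then 1 / ((mult_dx X (freq n J i))\<^sup>2 - 1) else 0)"

definition toeplitzJ :: "real \<Rightarrow> nat \<Rightarrow> nat \<Rightarrow> (real \<Rightarrow> nat \<Rightarrow> nat \<Rightarrow> complex) \<Rightarrow> complex mat" where
  "toeplitzJ X n J A = mat (hdim n J) (hdim n J)
     (\<lambda>(i, j). fourier_coeff X (\<lambda>x. A x (comp n i) (comp n j)) (freq n J i - freq n J j))"

definition LJ :: "real \<Rightarrow> nat \<Rightarrow> nat \<Rightarrow> (real \<Rightarrow> nat \<Rightarrow> nat \<Rightarrow> complex)
                   \<Rightarrow> (real \<Rightarrow> nat \<Rightarrow> nat \<Rightarrow> complex) \<Rightarrow> complex mat" where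
  "LJ X n J A0 A1 = DJ X n J * DJ X n J + DJ X n J * toeplitzJ X n J A1 + toeplitzJ X n J A0"

definition KJ :: "real \<Rightarrow> nat \<Rightarrow> nat \<Rightarrow> (real \<Rightarrow> nat \<Rightarrow> nat \<Rightarrow> complex)
                   \<Rightarrow> (real \<Rightarrow> nat \<Rightarrow> nat \<Rightarrow> complex) \<Rightarrow> complex \<Rightarrow> complex mat" where
  "KJ X n J A0 A1 z =
     DJ X n J * RJ X n J * toeplitzJ X n J A1
     + RJ X n J * (toeplitzJ X n J A0 + (1 - z) \<cdot>\<^sub>m 1\<^sub>m (hdim n J))"

definition mat_trace :: "complex mat \<Rightarrow> complex" where
  "mat_trace A = (\<Sum>i<dim_row A. A $$ (i, i))"

definition det2_I_minus :: "complex mat \<Rightarrow> complex" where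
  "det2_I_minus A = Determinant.det (1\<^sub>m (dim_row A) - A) * exp (mat_trace A)"

definition DJfun :: "real \<Rightarrow> nat \<Rightarrow> nat \<Rightarrow> (real \<Rightarrow> nat \<Rightarrow> nat \<Rightarrow> complex)
                   \<Rightarrow> (real \<Rightarrow> nat \<Rightarrow> nat \<Rightarrow> complex) \<Rightarrow> complex \<Rightarrow> complex" where
  "DJfun X n J A0 A1 z = det2_I_minus (- KJ X n J A0 A1 z)"

definition L2_per_mat :: "real \<Rightarrow> nat \<Rightarrow> (real \<Rightarrow> nat \<Rightarrow> nat \<Rightarrow> complex) \<Rightarrow> bool" where
  "L2_per_mat X n A \<longleftrightarrow>
     (\<forall>x. A (x + X) = A x) \<and>
     (\<forall>a<n. \<forall>b<n. set_borel_measurable lebesgue {0..X} (\<lambda>x. A x a b) \<and>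
                  set_integrable lebesgue {0..X} (\<lambda>x. (cmod (A x a b))\<^sup>2))"

end

theory Submission
  imports Defs
begin

text \<open>The resolvent multiplier \<open>R\<^sub>J\<close> of \<open>(\<partial>\<^sub>x\<^sup>2 - 1)\<^sup>-\<^sup>1\<close> is diagonal, invertible and commutes with
  \<open>\<D>\<^sub>J\<close>, and \<open>R\<^sub>J \<D>\<^sub>J\<^sup>2 = I + R\<^sub>J\<close>. Hence \<open>I + K\<^sub>J(\<lambda>) = R\<^sub>J (L\<^sub>J - \<lambda>I)\<close>, and since \<open>tr K\<^sub>J(\<lambda>)\<close> is affine
  in \<open>\<lambda>\<close>, \<open>D\<^sub>J(\<lambda>)\<close> is the characteristic polynomial of \<open>L\<^sub>J\<close> times an entire function without
  zeros. Zeros and their orders are therefore those of the characteristic polynomial.\<close>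

definition diag_matrix :: "nat \<Rightarrow> (nat \<Rightarrow> 'a::zero) \<Rightarrow> 'a mat" where
  "diag_matrix N a = mat N N (\<lambda>(i, j). if i = j then a i else 0)"

lemma diag_matrix_carrier [simp]: "diag_matrix N a \<in> carrier_mat N N"
  by (simp add: diag_matrix_def)

lemma diag_matrix_mult:
  "diag_matrix N a * diag_matrix N b = diag_matrix N (\<lambda>i. a i * b i :: 'a::semiring_0)"
proof (rule eq_matI)
  fix i j assume "i < dim_row (diag_matrix N (\<lambda>i. a i * b i))"
    "j < dim_col (diag_matrix N (\<lambda>i. a i * b i))"
  hence i: "i < N" and j: "j < N" by (auto simp: diag_matrix_def)
  have "(diag_matrix N a * diag_matrix N b) $$ (i, j)
      = (\<Sum>k<N. (if i = k then a i else 0) * (if k = j then b k else 0))"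
    using i j by (simp add: diag_matrix_def scalar_prod_def lessThan_atLeast0)
  also have "\<dots> = (\<Sum>k<N. if k = i then (if i = j then a i * b i else 0) else 0)"
    by (rule sum.cong) auto
  also have "\<dots> = diag_matrix N (\<lambda>i. a i * b i) $$ (i, j)"
    using i j by (simp add: diag_matrix_def)
  finally show "(diag_matrix N a * diag_matrix N b) $$ (i, j) = diag_matrix N (\<lambda>i. a i * b i) $$ (i, j)" .
qed (auto simp: diag_matrix_def)

lemma diag_matrix_mult_commute:
  "diag_matrix N a * diag_matrix N b = diag_matrix N b * (diag_matrix N a :: 'a::comm_semiring_0 mat)"
  by (simp add: diag_matrix_mult mult.commute)

lemma det_diag_matrix: "det (diag_matrix N a) = (\<Prod>i<N. a i :: 'a::comm_ring_1)"
  by (subst det_upper_triangular[of _ N])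
     (auto simp: diag_matrix_def upper_triangular_def prod_list_diag_prod lessThan_atLeast0)

lemma mat_trace_add:
  "A \<in> carrier_mat N N \<Longrightarrow> B \<in> carrier_mat N N \<Longrightarrow> mat_trace (A + B) = mat_trace A + mat_trace B"
  by (simp add: mat_trace_def sum.distrib)

lemma mat_trace_smult:
  "A \<in> carrier_mat N N \<Longrightarrow> mat_trace (c \<cdot>\<^sub>m A) = c * mat_trace A"
  by (simp add: mat_trace_def sum_distrib_left)

lemma det2_I_minus_uminus:
  "A \<in> carrier_mat N N \<Longrightarrow> det2_I_minus (- A) = det (1\<^sub>m N + A) * exp (- mat_trace A)"
proof -
  assume A: "A \<in> carrier_mat N N"
  have "1\<^sub>m N - (- A) = 1\<^sub>m N + A" using A by (intro eq_matI) auto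
  moreover have "mat_trace (- A) = - mat_trace A"
    using A by (simp add: mat_trace_def sum_negf)
  ultimately show ?thesis using A by (simp add: det2_I_minus_def)
qed

lemma det_char_matrix:
  assumes A: "A \<in> carrier_mat N N"
  shows "det (char_matrix A z) = (-1) ^ N * poly (char_poly A) z"
proof -
  have C: "char_matrix A z \<in> carrier_mat N N" using A by simp
  have "- char_matrix A z = (-1) \<cdot>\<^sub>m char_matrix A z"
    using C by (intro eq_matI) auto
  hence "poly (char_poly A) z = (-1) ^ N * det (char_matrix A z)"
    using C by (simp add: char_poly_matrix[OF A])
  thus ?thesis by (simp flip: power_mult_distrib)
qed

lemma one_plus_resolvent_eq_mult_char_matrix:
  fixes D R T0 T1 :: "'a::field mat"
  assumes D: "D \<in> carrier_mat N N" and R: "R \<in> carrier_mat N N"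
    and T0: "T0 \<in> carrier_mat N N" and T1: "T1 \<in> carrier_mat N N"
    and commute: "D * R = R * D" and resolvent: "R * (D * D) = 1\<^sub>m N + R"
  shows "1\<^sub>m N + (D * R * T1 + R * (T0 + (1 - z) \<cdot>\<^sub>m 1\<^sub>m N))
       = R * char_matrix (D * D + D * T1 + T0) z"
proof -
  have "R * char_matrix (D * D + D * T1 + T0) z
      = R * (D * D) + R * (D * T1) + R * T0 + (- z) \<cdot>\<^sub>m R"
    using D R T0 T1
    by (simp add: char_matrix_def mult_add_distrib_mat[of _ N N _ N] mult_smult_distrib[of _ N N _ N])
  also have "R * (D * T1) = D * R * T1"
    using D R T1 by (simp add: commute assoc_mult_mat[of _ N N _ N _ N])
  also have "R * (T0 + (1 - z) \<cdot>\<^sub>m 1\<^sub>m N) = R * T0 + (1 - z) \<cdot>\<^sub>m R"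
    using R T0 by (simp add: mult_add_distrib_mat[of _ N N _ N] mult_smult_distrib[of _ N N _ N])
  moreover have "D * R * T1 \<in> carrier_mat N N" "R * T0 \<in> carrier_mat N N"
    using D R T0 T1 by auto
  ultimately show ?thesis
    unfolding resolvent using R
    by (intro eq_matI) (auto simp del: index_mult_mat simp: algebra_simps)
qed

lemma zorder_poly_mult_nonvanishing:
  fixes p :: "complex poly"
  assumes "p \<noteq> 0" and "g holomorphic_on UNIV" and "g z \<noteq> 0"
  shows "zorder (\<lambda>w. poly p w * g w) z = int (order z p)"
proof -
  obtain q where q: "p = [:- z, 1:] ^ order z p * q" and "\<not> [:- z, 1:] dvd q"
    using order_decomp[OF \<open>p \<noteq> 0\<close>] by blast
  hence "poly q z \<noteq> 0" by (simp add: poly_eq_0_iff_dvd)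
  show ?thesis
  proof (rule zorder_eqI[where S = UNIV and g = "\<lambda>w. poly q w * g w"])
    show "(\<lambda>w. poly q w * g w) holomorphic_on UNIV"
      using assms(2) by (intro holomorphic_intros)
    show "poly p w * g w = poly q w * g w * (w - z) powi int (order z p)" for w
      by (subst q) (simp add: poly_power algebra_simps)
  qed (use assms(3) \<open>poly q z \<noteq> 0\<close> in auto)
qed

lemma mult_dx_square_neq_one: "(mult_dx X k)\<^sup>2 \<noteq> 1"
proof
  assume "(mult_dx X k)\<^sup>2 = 1"
  moreover have "(mult_dx X k)\<^sup>2 = complex_of_real (- (2 * pi * of_int k / X)\<^sup>2)"
    by (simp add: mult_dx_def power2_eq_square field_simps)
  ultimately have "- (2 * pi * of_int k / X)\<^sup>2 = (1::real)"
    by (metis of_real_eq_1_iff)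
  thus False by (smt (verit) zero_le_power2)
qed

lemma DJ_eq_diag_matrix: "DJ X n J = diag_matrix (hdim n J) (\<lambda>i. mult_dx X (freq n J i))"
  by (simp add: DJ_def diag_matrix_def)

lemma RJ_eq_diag_matrix:
  "RJ X n J = diag_matrix (hdim n J) (\<lambda>i. 1 / ((mult_dx X (freq n J i))\<^sup>2 - 1))"
  by (simp add: RJ_def diag_matrix_def)

lemma RJ_DJ_square: "RJ X n J * (DJ X n J * DJ X n J) = 1\<^sub>m (hdim n J) + RJ X n J"
proof -
  have "1 / (d\<^sup>2 - 1) * (d * d) = 1 + 1 / (d\<^sup>2 - 1)" if "d\<^sup>2 \<noteq> 1" for d :: complex
    using that by (simp add: power2_eq_square field_simps)
  hence "RJ X n J * (DJ X n J * DJ X n J)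
      = diag_matrix (hdim n J) (\<lambda>i. 1 + 1 / ((mult_dx X (freq n J i))\<^sup>2 - 1))"
    unfolding RJ_eq_diag_matrix DJ_eq_diag_matrix diag_matrix_mult
    by (simp add: mult_dx_square_neq_one)
  also have "\<dots> = 1\<^sub>m (hdim n J) + RJ X n J"
    by (rule eq_matI) (auto simp: RJ_eq_diag_matrix diag_matrix_def)
  finally show ?thesis .
qed

lemma det_RJ_neq_zero: "det (RJ X n J) \<noteq> 0"
  by (simp add: RJ_eq_diag_matrix det_diag_matrix mult_dx_square_neq_one)

lemma DJ_carrier [simp]: "DJ X n J \<in> carrier_mat (hdim n J) (hdim n J)"
  by (simp add: DJ_eq_diag_matrix)

lemma RJ_carrier [simp]: "RJ X n J \<in> carrier_mat (hdim n J) (hdim n J)"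
  by (simp add: RJ_eq_diag_matrix)

lemma toeplitzJ_carrier [simp]: "toeplitzJ X n J A \<in> carrier_mat (hdim n J) (hdim n J)"
  by (simp add: toeplitzJ_def)

lemma KJ_carrier: "KJ X n J A0 A1 z \<in> carrier_mat (hdim n J) (hdim n J)"
  unfolding KJ_def by (intro add_carrier_mat mult_carrier_mat smult_carrier_mat) auto

lemma LJ_carrier: "LJ X n J A0 A1 \<in> carrier_mat (hdim n J) (hdim n J)"
  unfolding LJ_def by (intro add_carrier_mat mult_carrier_mat) auto

lemma one_plus_KJ_eq:
  "1\<^sub>m (hdim n J) + KJ X n J A0 A1 z = RJ X n J * char_matrix (LJ X n J A0 A1) z"
  unfolding KJ_def LJ_def
  by (rule one_plus_resolvent_eq_mult_char_matrix[OF DJ_carrier RJ_carrier toeplitzJ_carrier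
        toeplitzJ_carrier _ RJ_DJ_square])
     (simp add: DJ_eq_diag_matrix RJ_eq_diag_matrix diag_matrix_mult_commute)

lemma mat_trace_KJ:
  "mat_trace (KJ X n J A0 A1 z)
     = mat_trace (DJ X n J * RJ X n J * toeplitzJ X n J A1) + mat_trace (RJ X n J * toeplitzJ X n J A0)
       + (1 - z) * mat_trace (RJ X n J)"
proof -
  let ?N = "hdim n J"
  have "KJ X n J A0 A1 z
      = DJ X n J * RJ X n J * toeplitzJ X n J A1 + (RJ X n J * toeplitzJ X n J A0
        + (1 - z) \<cdot>\<^sub>m RJ X n J)"
    by (simp add: KJ_def mult_add_distrib_mat[of _ ?N ?N _ ?N] mult_smult_distrib[of _ ?N ?N _ ?N]
        right_mult_one_mat[OF RJ_carrier])
  moreover have "DJ X n J * RJ X n J * toeplitzJ X n J A1 \<in> carrier_mat ?N ?N"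
    "RJ X n J * toeplitzJ X n J A0 \<in> carrier_mat ?N ?N"
    by (meson DJ_carrier RJ_carrier toeplitzJ_carrier mult_carrier_mat)+
  ultimately show ?thesis by (simp add: mat_trace_add[of _ ?N] mat_trace_smult[of _ ?N])
qed

lemma DJfun_eq_char_poly_mult:
  "DJfun X n J A0 A1 z = poly (char_poly (LJ X n J A0 A1)) z
     * ((-1) ^ hdim n J * det (RJ X n J) * exp (- mat_trace (KJ X n J A0 A1 z)))"
  unfolding DJfun_def det2_I_minus_uminus[OF KJ_carrier] one_plus_KJ_eq
  by (simp add: det_mult[of _ "hdim n J"] det_char_matrix[OF LJ_carrier] LJ_carrier)

theorem lemma3p7:
  fixes X :: real and n J :: nat and A0 A1 :: "real \<Rightarrow> nat \<Rightarrow> nat \<Rightarrow> complex"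
  assumes "X > 0" and "n \<ge> 1"
    and "L2_per_mat X n A0" and "L2_per_mat X n A1"
  shows "\<forall>z::complex.
           (DJfun X n J A0 A1 z = 0 \<longleftrightarrow> eigenvalue (LJ X n J A0 A1) z) \<and>
           (eigenvalue (LJ X n J A0 A1) z \<longrightarrow>
              zorder (DJfun X n J A0 A1) z = int (order z (char_poly (LJ X n J A0 A1))))"
proof (intro allI conjI impI)
  fix z
  let ?L = "LJ X n J A0 A1"
  define E where "E w = (-1) ^ hdim n J * det (RJ X n J) * exp (- mat_trace (KJ X n J A0 A1 w))"
    for w
  have DJfun_factor: "DJfun X n J A0 A1 = (\<lambda>w. poly (char_poly ?L) w * E w)"
    by (simp add: fun_eq_iff E_def DJfun_eq_char_poly_mult)
  have E_nonzero: "E w \<noteq> 0" for w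
    by (simp add: E_def det_RJ_neq_zero)
  have "char_poly ?L \<noteq> 0"
    using degree_monic_char_poly[OF LJ_carrier[of X n J A0 A1]] by auto
  moreover have "E holomorphic_on UNIV"
    unfolding E_def mat_trace_KJ by (intro holomorphic_intros)
  ultimately show "zorder (DJfun X n J A0 A1) z = int (order z (char_poly ?L))"
    unfolding DJfun_factor using E_nonzero by (rule zorder_poly_mult_nonvanishing)
  show "DJfun X n J A0 A1 z = 0 \<longleftrightarrow> eigenvalue ?L z"
    by (simp add: DJfun_factor E_nonzero eigenvalue_root_char_poly[OF LJ_carrier])
qed

end
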